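(* Let $q$ be a prime power and $T\in\mathbb F_q[X,Y,Z]$ a reduced polynomial satisfying Property (a): $T(a,0,z)=T(0,b,z)=z$ for all $a,b,z\in\mathbb F_q$, and Property (b): $T(x,1,0)=x$ and $T(1,y,0)=y$ for all $x,y\in\mathbb F_q$. Then $$T(X,Y,Z)=Z+XYZ\,M_1(X,Y,Z)+M_2(X,Y),$$ with $M_1(X,Y,Z)=\sum_{i,j,k=0}^{q-2}b_{ijk}X^iY^jZ^k$ and $M_2(X,Y)=\sum_{i=1}^{q-1}\sum_{j=1}^{q-1}c_{ij}X^iY^j$, where for every $1\le j\le q-1$, $$\sum_{i=1}^{q-1}c_{ij}=\sum_{i=1}^{q-1}c_{ji}=\begin{cases}1&\text{if } j=1,\\0&\text{if } j>1.\end{cases}$$ Moreover $T(1,y,z)=y+z+yz\,M_1(1,y,z)$ for all $y,z\in\mathbb F_q$.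
   Context: A polynomial is reduced if its degree in each variable is less than $q$. *)

theory Defs
  imports Main
begin

text \<open>A polynomial in F[X,Y,Z] is represented by its coefficient function
  (i,j,k) maps to the coefficient of X^i Y^j Z^k.\<close>

definition reduced3 :: "nat \<Rightarrow> (nat \<Rightarrow> nat \<Rightarrow> nat \<Rightarrow> 'a::zero) \<Rightarrow> bool" where
  "reduced3 q t \<longleftrightarrow> (\<forall>i j k. t i j k \<noteq> 0 \<longrightarrow> i < q \<and> j < q \<and> k < q)"

definition eval3 :: "nat \<Rightarrow> (nat \<Rightarrow> nat \<Rightarrow> nat \<Rightarrow> 'a::comm_ring_1) \<Rightarrow> 'a \<Rightarrow> 'a \<Rightarrow> 'a \<Rightarrow> 'a" where
  "eval3 q t x y z = (\<Sum>i<q. \<Sum>j<q. \<Sum>k<q. t i j k * x ^ i * y ^ j * z ^ k)"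

end

theory Submission
  imports Defs "HOL-Computational_Algebra.Polynomial"
begin

text \<open>Over a field with q elements a polynomial function of degree below q in each variable
  determines its coefficients, because a nonzero univariate polynomial of degree below q has
  fewer than q roots. Property (a) therefore fixes every coefficient of a monomial free of X or
  of Y, leaving only Z; property (b) fixes the row and column sums of the coefficients of the
  Z-free monomials X^i Y^j. At X = 1 the Z-free part collapses to its column sums, i.e. to Y.\<close>

lemma poly_sum_eq_imp_coeff_eq:
  fixes a b :: "nat \<Rightarrow> 'a::idom"
  assumes A: "finite A" "n \<le> card A"
    and eq: "\<forall>x\<in>A. (\<Sum>i<n. a i * x ^ i) = (\<Sum>i<n. b i * x ^ i)"
    and i: "i < n"
  shows "a i = b i"
proof (rule ccontr)
  define p where "p = (\<Sum>i<n. monom (a i - b i) i)"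
  assume "a i \<noteq> b i"
  then have "p \<noteq> 0"
    using i by (auto simp: p_def coeff_sum coeff_monom poly_eq_iff intro!: exI[of _ i])
  have "A \<subseteq> {x. poly p x = 0}"
    using eq by (auto simp: p_def poly_sum poly_monom left_diff_distrib sum_subtractf)
  then have "card A \<le> card {x. poly p x = 0}"
    using poly_roots_finite[OF \<open>p \<noteq> 0\<close>] by (rule card_mono[rotated])
  also have "\<dots> \<le> degree p"
    using \<open>p \<noteq> 0\<close> by (rule card_poly_roots_bound)
  also have "\<dots> \<le> n - 1"
    unfolding p_def by (rule degree_sum_le) (auto intro: order_trans[OF degree_monom_le])
  finally show False
    using A i by linarith
qed

lemma poly_sum2_eq_imp_coeff_eq:
  fixes a b :: "nat \<Rightarrow> nat \<Rightarrow> 'a::idom"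
  assumes A: "finite A" "n \<le> card A"
    and eq: "\<forall>x\<in>A. \<forall>z\<in>A. (\<Sum>i<n. \<Sum>k<n. a i k * x ^ i * z ^ k) = (\<Sum>i<n. \<Sum>k<n. b i k * x ^ i * z ^ k)"
    and ik: "i < n" "k < n"
  shows "a i k = b i k"
proof -
  have nested: "(\<Sum>i<n. \<Sum>k<n. c i k * x ^ i * z ^ k) = (\<Sum>i<n. (\<Sum>k<n. c i k * z ^ k) * x ^ i)"
    for c :: "nat \<Rightarrow> nat \<Rightarrow> 'a" and x z
    by (simp add: sum_distrib_left sum_distrib_right mult_ac)
  have "\<forall>z\<in>A. (\<Sum>k<n. a i k * z ^ k) = (\<Sum>k<n. b i k * z ^ k)"
  proof
    fix z assume "z \<in> A"
    with eq show "(\<Sum>k<n. a i k * z ^ k) = (\<Sum>k<n. b i k * z ^ k)"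
      by (intro poly_sum_eq_imp_coeff_eq[OF A _ ik(1)]) (simp add: nested)
  qed
  then show ?thesis
    using poly_sum_eq_imp_coeff_eq[OF A _ ik(2)] by blast
qed

lemma card_UNIV_field_ge_2: "card (UNIV :: 'a::{finite,field} set) \<ge> 2"
proof -
  have "card {0::'a, 1} \<le> card (UNIV :: 'a set)"
    by (rule card_mono) auto
  then show ?thesis
    by simp
qed

lemma eval3_y0: "eval3 q T x 0 z = (\<Sum>i<q. \<Sum>k<q. T i 0 k * x ^ i * z ^ k)"
  unfolding eval3_def
  by (cases q) (simp_all add: sum.lessThan_Suc_shift power_0_left del: sum.lessThan_Suc)

lemma eval3_z0: "eval3 q T x y 0 = (\<Sum>i<q. \<Sum>j<q. T i j 0 * x ^ i * y ^ j)"
  unfolding eval3_def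
  by (cases q) (simp_all add: sum.lessThan_Suc_shift power_0_left del: sum.lessThan_Suc)

text \<open>Not usable as a simp rule: its left-hand side is a higher-order pattern matching every
  T, so rewriting loops; instantiate T explicitly.\<close>

lemma eval3_swap_xy: "eval3 q (\<lambda>i j k. T j i k) x y z = eval3 q T y x z"
  unfolding eval3_def by (subst sum.swap) (simp add: mult_ac)

lemma reduced3_swap_xy: "reduced3 q T \<Longrightarrow> reduced3 q (\<lambda>i j k. T j i k)"
  unfolding reduced3_def by blast

lemma sum_monomial_Z:
  fixes x z :: "'a::comm_ring_1"
  assumes "q \<ge> 2"
  shows "(\<Sum>i<q. \<Sum>k<q. (if i = 0 \<and> k = 1 then 1 else 0) * x ^ i * z ^ k) = z"
proof -
  have "(\<Sum>k<q. (if i = 0 \<and> k = 1 then 1 else 0) * x ^ i * z ^ k) = (if i = 0 then z else 0)" for i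
    using assms by (cases "i = 0") (simp_all add: if_distrib if_distribR cong: if_cong)
  then show ?thesis
    using assms by simp
qed

lemma sum_monomial_X:
  fixes x :: "'a::comm_ring_1"
  assumes "q \<ge> 2"
  shows "(\<Sum>i<q. (if i = 1 then 1 else 0) * x ^ i) = x"
  using assms by (simp add: if_distrib if_distribR cong: if_cong)

lemma eval3_y0_eq_z_imp_coeffs:
  fixes T :: "nat \<Rightarrow> nat \<Rightarrow> nat \<Rightarrow> 'a::{finite,field}"
  assumes red: "reduced3 (card (UNIV :: 'a set)) T"
    and eval: "\<forall>x z. eval3 (card (UNIV :: 'a set)) T x 0 z = z"
  shows "T i 0 k = (if i = 0 \<and> k = 1 then 1 else 0)"
proof -
  let ?q = "card (UNIV :: 'a set)"
  have q: "?q \<ge> 2"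
    by (rule card_UNIV_field_ge_2)
  show ?thesis
  proof (cases "i < ?q \<and> k < ?q")
    case True
    have "\<forall>x\<in>UNIV. \<forall>z\<in>UNIV. (\<Sum>i<?q. \<Sum>k<?q. T i 0 k * x ^ i * z ^ k)
        = (\<Sum>i<?q. \<Sum>k<?q. (if i = 0 \<and> k = 1 then 1 else 0) * x ^ i * z ^ k)"
      using eval unfolding eval3_y0 sum_monomial_Z[OF q] by blast
    with True show ?thesis
      by (intro poly_sum2_eq_imp_coeff_eq[of UNIV ?q]) simp_all
  next
    case False
    then show ?thesis
      using red q unfolding reduced3_def by auto
  qed
qed

lemma sum_atLeast_1_eq_lessThan:
  fixes f :: "nat \<Rightarrow> 'a::comm_monoid_add"
  assumes "f 0 = 0"
  shows "(\<Sum>i=1..n-1. f i) = (\<Sum>i<n. f i)"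
  using assms by (cases n) (simp_all add: sum.atLeast1_atMost_eq sum.lessThan_Suc_shift del: sum.lessThan_Suc)

lemma eval3_y1_z0_eq_x_imp_row_sums:
  fixes T :: "nat \<Rightarrow> nat \<Rightarrow> nat \<Rightarrow> 'a::{finite,field}"
  assumes eval: "\<forall>x. eval3 (card (UNIV :: 'a set)) T x 1 0 = x"
    and axis: "T i 0 0 = 0"
    and i: "i < card (UNIV :: 'a set)"
  shows "(\<Sum>j=1..card (UNIV :: 'a set) - 1. T i j 0) = (if i = 1 then 1 else 0)"
proof -
  let ?q = "card (UNIV :: 'a set)"
  have "\<forall>x\<in>UNIV. (\<Sum>i<?q. (\<Sum>j<?q. T i j 0) * x ^ i) = (\<Sum>i<?q. (if i = 1 then 1 else 0) * x ^ i)"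
    using eval unfolding sum_monomial_X[OF card_UNIV_field_ge_2]
    by (simp add: eval3_z0 sum_distrib_right)
  with i have "(\<Sum>j<?q. T i j 0) = (if i = 1 then 1 else 0)"
    by (intro poly_sum_eq_imp_coeff_eq[of UNIV ?q]) simp_all
  then show ?thesis
    using sum_atLeast_1_eq_lessThan[of "\<lambda>j. T i j 0" ?q] axis by simp
qed

lemma reduced3_support:
  fixes T :: "nat \<Rightarrow> nat \<Rightarrow> nat \<Rightarrow> 'a::{monoid_add,one}"
  assumes red: "reduced3 q T"
    and axis_x: "\<And>j k. T 0 j k = (if j = 0 \<and> k = 1 then 1 else 0)"
    and axis_y: "\<And>i k. T i 0 k = (if i = 0 \<and> k = 1 then 1 else 0)"
  shows "T i j k = (if i = 0 \<and> j = 0 \<and> k = 1 then 1 else 0)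
    + (if 1 \<le> i \<and> i \<le> q - 1 \<and> 1 \<le> j \<and> j \<le> q - 1 \<and> 1 \<le> k \<and> k \<le> q - 1 then T i j k else 0)
    + (if k = 0 \<and> 1 \<le> i \<and> i \<le> q - 1 \<and> 1 \<le> j \<and> j \<le> q - 1 then T i j 0 else 0)"
proof (cases "i = 0 \<or> j = 0")
  case True
  then show ?thesis
    using axis_x axis_y by auto
next
  case False
  have "T i j k = 0" if "\<not> (i \<le> q - 1 \<and> j \<le> q - 1 \<and> k \<le> q - 1)"
    using red that unfolding reduced3_def by fastforce
  with False show ?thesis
    by (cases "k = 0") auto
qed

lemma eval3_decompose:
  fixes T :: "nat \<Rightarrow> nat \<Rightarrow> nat \<Rightarrow> 'a::comm_ring_1"
  assumes q: "q \<ge> 2"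
    and axis_x: "\<And>j k. T 0 j k = (if j = 0 \<and> k = 1 then 1 else 0)"
    and axis_y: "\<And>i k. T i 0 k = (if i = 0 \<and> k = 1 then 1 else 0)"
  shows "eval3 q T x y z = z
    + (\<Sum>i=1..q-1. \<Sum>j=1..q-1. T i j 0 * x ^ i * y ^ j)
    + x * y * z * (\<Sum>i\<le>q-2. \<Sum>j\<le>q-2. \<Sum>k\<le>q-2. T (Suc i) (Suc j) (Suc k) * x ^ i * y ^ j * z ^ k)"
proof -
  obtain n where n: "q = Suc n"
    using q by (cases q) auto
  have "(\<Sum>j<q. \<Sum>k<q. T 0 j k * y ^ j * z ^ k) = z"
    using sum_monomial_Z[OF q, of y z] unfolding axis_x by simp
  then have "eval3 q T x y z = z
    + (\<Sum>i<q-1. \<Sum>j<q-1. T (Suc i) (Suc j) 0 * x ^ Suc i * y ^ Suc j)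
    + x * y * z * (\<Sum>i<q-1. \<Sum>j<q-1. \<Sum>k<q-1. T (Suc i) (Suc j) (Suc k) * x ^ i * y ^ j * z ^ k)"
    unfolding eval3_def n
    by (simp add: sum.lessThan_Suc_shift axis_y sum.distrib sum_distrib_left mult_ac del: sum.lessThan_Suc)
  moreover have "{..q-2} = {..<q-1}"
    using q by auto
  ultimately show ?thesis
    by (simp add: sum.atLeast1_atMost_eq)
qed

lemma eval3_x1_decompose:
  fixes T :: "nat \<Rightarrow> nat \<Rightarrow> nat \<Rightarrow> 'a::comm_ring_1"
  assumes q: "q \<ge> 2"
    and axis_x: "\<And>j k. T 0 j k = (if j = 0 \<and> k = 1 then 1 else 0)"
    and axis_y: "\<And>i k. T i 0 k = (if i = 0 \<and> k = 1 then 1 else 0)"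
    and col_sums: "\<And>j. j \<in> {1..q-1} \<Longrightarrow> (\<Sum>i=1..q-1. T i j 0) = (if j = 1 then 1 else 0)"
  shows "eval3 q T 1 y z = y + z
    + y * z * (\<Sum>i\<le>q-2. \<Sum>j\<le>q-2. \<Sum>k\<le>q-2. T (Suc i) (Suc j) (Suc k) * 1 ^ i * y ^ j * z ^ k)"
proof -
  have "(\<Sum>i=1..q-1. \<Sum>j=1..q-1. T i j 0 * 1 ^ i * y ^ j) = (\<Sum>j=1..q-1. (\<Sum>i=1..q-1. T i j 0) * y ^ j)"
    by (subst sum.swap) (simp add: sum_distrib_right)
  also have "\<dots> = (\<Sum>j=1..q-1. if j = 1 then y else 0)"
    using col_sums by (intro sum.cong refl) simp
  also have "\<dots> = y"
    using q by simp
  finally show ?thesis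
    using eval3_decompose[OF q axis_x axis_y, of 1 y z] by (simp add: add_ac)
qed

theorem lemma4p7:
  fixes T :: "nat \<Rightarrow> nat \<Rightarrow> nat \<Rightarrow> 'a::{finite,field}"
    and q :: nat
  defines "q \<equiv> card (UNIV :: 'a set)"
  assumes red: "reduced3 q T"
    and propa: "\<forall>a b z. eval3 q T a 0 z = z \<and> eval3 q T 0 b z = z"
    and propb: "\<forall>x y. eval3 q T x 1 0 = x \<and> eval3 q T 1 y 0 = y"
  shows "\<exists>(b :: nat \<Rightarrow> nat \<Rightarrow> nat \<Rightarrow> 'a) (c :: nat \<Rightarrow> nat \<Rightarrow> 'a).
     (\<forall>i j k. T i j k =
         (if i = 0 \<and> j = 0 \<and> k = 1 then 1 else 0)
       + (if 1 \<le> i \<and> i \<le> q - 1 \<and> 1 \<le> j \<and> j \<le> q - 1 \<and> 1 \<le> k \<and> k \<le> q - 1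
          then b (i - 1) (j - 1) (k - 1) else 0)
       + (if k = 0 \<and> 1 \<le> i \<and> i \<le> q - 1 \<and> 1 \<le> j \<and> j \<le> q - 1 then c i j else 0))
   \<and> (\<forall>j\<in>{1..q-1}.
        (\<Sum>i=1..q-1. c i j) = (if j = 1 then 1 else 0)
      \<and> (\<Sum>i=1..q-1. c j i) = (if j = 1 then 1 else 0))
   \<and> (\<forall>y z. eval3 q T 1 y z =
        y + z + y * z * (\<Sum>i\<le>q-2. \<Sum>j\<le>q-2. \<Sum>k\<le>q-2. b i j k * 1 ^ i * y ^ j * z ^ k))"
proof -
  let ?T' = "\<lambda>i j k. T j i k"
  have q: "q \<ge> 2"
    unfolding q_def by (rule card_UNIV_field_ge_2)
  have axis_y: "T i 0 k = (if i = 0 \<and> k = 1 then 1 else 0)" for i k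
    using red propa unfolding q_def by (intro eval3_y0_eq_z_imp_coeffs) simp_all
  have axis_x: "T 0 j k = (if j = 0 \<and> k = 1 then 1 else 0)" for j k
    using eval3_y0_eq_z_imp_coeffs[of ?T' j k] reduced3_swap_xy[OF red] propa
    unfolding q_def by (simp add: eval3_swap_xy[of _ T])
  have row_sums: "(\<Sum>j=1..q-1. T i j 0) = (if i = 1 then 1 else 0)" if "i \<in> {1..q-1}" for i
    using eval3_y1_z0_eq_x_imp_row_sums[of T i] propb axis_y[of i 0] that q
    unfolding q_def by auto
  have col_sums: "(\<Sum>i=1..q-1. T i j 0) = (if j = 1 then 1 else 0)" if "j \<in> {1..q-1}" for j
    using eval3_y1_z0_eq_x_imp_row_sums[of ?T' j] propb axis_x[of j 0] that q
    unfolding q_def by (auto simp: eval3_swap_xy[of _ T])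
  show ?thesis
    apply (intro exI[of _ "\<lambda>i j k. T (Suc i) (Suc j) (Suc k)"] exI[of _ "\<lambda>i j. T i j 0"] conjI allI ballI)
    subgoal for i j k
      using reduced3_support[OF red axis_x axis_y, of i j k] by (simp cong: if_cong)
    using row_sums col_sums eval3_x1_decompose[OF q axis_x axis_y col_sums] by simp_all
qed

end
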